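(* Let $V$ be a normal matrix ordered $*$-operator space, and for each $n$ let $d_{n,V}(A)=\inf\{\|A+P\|_{n,n}:P\in M_n(V)_+\}$ for $A\in M_n(V)_{sa}$. Then $(V,\{d_{n,V}\})$ is an $L^\infty$-matricially ordered space.
   Context: A $*$-vector space is a complex vector space with a conjugate-linear involution; $M_{n,m}(V)$ carries $(x_{ij})^*=(x_{ji}^* )$ and $M_n(V)_{sa}$ is its real subspace of self-adjoint elements. An operator space is a complex vector space with norms $\|\cdot\|_{n,m}$ on $M_{n,m}(V)$ satisfying $\|XAY\|\le\|X\|\|A\|\|Y\|$ for scalar matrices $X,Y$ and $\|A\oplus B\|=\max\{\|A\|,\|B\|\}$; a $*$-operator space additionally has $\|A^*\|_{m,n}=\|A\|_{n,m}$. It is matrix ordered if each $M_n(V)_+\subseteq M_n(V)_{sa}$ is a proper cone with $A\oplus B\in M_{n+k}(V)_+$ and $XBX^*\in M_l(V)_+$ whenever $A\in M_n(V)_+$, $B\in M_k(V)_+$, $X\in M_{l,k}$; it is normal if each $M_n(V)_+$ is norm closed and $A\le B\le C$ in $M_n(V)_{sa}$ implies $\|B\|\le\max\{\|A\|,\|C\|\}$. A gauge on a real vector space is a subadditive, positively homogeneous map into $[0,\infty)$; it is proper if $\nu(x)=\nu(-x)=0$ implies $x=0$. An $L^\infty$-matricially ordered space ($L^\infty$-MOS) is a $*$-vector space $V$ with proper gauges $\nu_n:M_n(V)_{sa}\to[0,\infty)$ such that (1) $\nu_k(X^*AX)\le\|X\|^2\nu_n(A)$ for $X\in M_{n,k}$,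 $A\in M_n(V)_{sa}$, and (2) $\nu_{n+k}(A\oplus B)=\max\{\nu_n(A),\nu_k(B)\}$ for $A\in M_n(V)_{sa}$, $B\in M_k(V)_{sa}$. *)

theory Defs
  imports Complex_Main "HOL-Library.Function_Algebras"
begin

text \<open>Matrices over V are modelled as functions nat => nat => 'v; an n x m matrix
is one vanishing outside the index box {0..<n} x {0..<m}. The complex vector space structure on V is given
explicitly by a scalar multiplication scal and the involution by star.\<close>

type_synonym 'v mat = "nat \<Rightarrow> nat \<Rightarrow> 'v"

definition mats :: "nat \<Rightarrow> nat \<Rightarrow> ('v::zero) mat set" where
  "mats n m = {A. \<forall>i j. (n \<le> i \<or> m \<le> j) \<longrightarrow> A i j = 0}"

definition star_vector_space ::
  "(complex \<Rightarrow> 'v::ab_group_add \<Rightarrow> 'v) \<Rightarrow> ('v \<Rightarrow> 'v) \<Rightarrow> bool" where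
  "star_vector_space scal star \<longleftrightarrow>
     (\<forall>a x y. scal a (x + y) = scal a x + scal a y) \<and>
     (\<forall>a b x. scal (a + b) x = scal a x + scal b x) \<and>
     (\<forall>a b x. scal a (scal b x) = scal (a * b) x) \<and>
     (\<forall>x. scal 1 x = x) \<and>
     (\<forall>x y. star (x + y) = star x + star y) \<and>
     (\<forall>a x. star (scal a x) = scal (cnj a) (star x)) \<and>
     (\<forall>x. star (star x) = x)"

definition mscal :: "(complex \<Rightarrow> 'v \<Rightarrow> 'v) \<Rightarrow> complex \<Rightarrow> 'v mat \<Rightarrow> 'v mat" where
  "mscal scal c A = (\<lambda>i j. scal c (A i j))"

definition mstar :: "('v \<Rightarrow> 'v) \<Rightarrow> 'v mat \<Rightarrow> 'v mat" where
  "mstar star A = (\<lambda>i j. star (A j i))"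

definition sa :: "('v::zero \<Rightarrow> 'v) \<Rightarrow> nat \<Rightarrow> 'v mat set" where
  "sa star n = {A \<in> mats n n. mstar star A = A}"

definition mprod :: "(complex \<Rightarrow> 'v::comm_monoid_add \<Rightarrow> 'v) \<Rightarrow> nat \<Rightarrow> nat \<Rightarrow>
    complex mat \<Rightarrow> 'v mat \<Rightarrow> complex mat \<Rightarrow> 'v mat" where
  "mprod scal n m X A Y = (\<lambda>i j. \<Sum>p<n. \<Sum>q<m. scal (X i p * Y q j) (A p q))"

definition ctrans :: "complex mat \<Rightarrow> complex mat" where
  "ctrans X = (\<lambda>i j. cnj (X j i))"

definition dsum :: "nat \<Rightarrow> nat \<Rightarrow> ('v::zero) mat \<Rightarrow> 'v mat \<Rightarrow> 'v mat" where
  "dsum n m A B = (\<lambda>i j. if i < n \<and> j < m then A i j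
                         else if n \<le> i \<and> m \<le> j then B (i - n) (j - m) else 0)"

definition vnorm :: "nat \<Rightarrow> (nat \<Rightarrow> complex) \<Rightarrow> real" where
  "vnorm n v = sqrt (\<Sum>i<n. (cmod (v i))\<^sup>2)"

definition mulv :: "nat \<Rightarrow> complex mat \<Rightarrow> (nat \<Rightarrow> complex) \<Rightarrow> (nat \<Rightarrow> complex)" where
  "mulv m X v = (\<lambda>i. \<Sum>j<m. X i j * v j)"

definition cnorm :: "nat \<Rightarrow> nat \<Rightarrow> complex mat \<Rightarrow> real" where
  "cnorm n m X = (SUP v\<in>{v. vnorm m v \<le> 1}. vnorm n (mulv m X v))"

definition is_norm_on ::
  "(complex \<Rightarrow> 'v::ab_group_add \<Rightarrow> 'v) \<Rightarrow> nat \<Rightarrow> nat \<Rightarrow> ('v mat \<Rightarrow> real) \<Rightarrow> bool" where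
  "is_norm_on scal n m N \<longleftrightarrow>
     (\<forall>A\<in>mats n m. 0 \<le> N A \<and> (N A = 0 \<longleftrightarrow> A = 0)) \<and>
     (\<forall>c. \<forall>A\<in>mats n m. N (mscal scal c A) = cmod c * N A) \<and>
     (\<forall>A\<in>mats n m. \<forall>B\<in>mats n m. N (A + B) \<le> N A + N B)"

definition star_operator_space ::
  "(complex \<Rightarrow> 'v::ab_group_add \<Rightarrow> 'v) \<Rightarrow> ('v \<Rightarrow> 'v) \<Rightarrow>
   (nat \<Rightarrow> nat \<Rightarrow> 'v mat \<Rightarrow> real) \<Rightarrow> bool" where
  "star_operator_space scal star nrm \<longleftrightarrow>
     star_vector_space scal star \<and>
     (\<forall>n m. 0 < n \<and> 0 < m \<longrightarrow> is_norm_on scal n m (nrm n m)) \<and>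
     (\<forall>l n m k X A Y. 0 < l \<and> 0 < n \<and> 0 < m \<and> 0 < k \<and>
        X \<in> mats l n \<and> A \<in> mats n m \<and> Y \<in> mats m k \<longrightarrow>
        nrm l k (mprod scal n m X A Y) \<le> cnorm l n X * nrm n m A * cnorm m k Y) \<and>
     (\<forall>n m k l A B. 0 < n \<and> 0 < m \<and> 0 < k \<and> 0 < l \<and>
        A \<in> mats n m \<and> B \<in> mats k l \<longrightarrow>
        nrm (n + k) (m + l) (dsum n m A B) = max (nrm n m A) (nrm k l B)) \<and>
     (\<forall>n m A. 0 < n \<and> 0 < m \<and> A \<in> mats n m \<longrightarrow>
        nrm m n (mstar star A) = nrm n m A)"

definition proper_cone :: "(complex \<Rightarrow> 'v::ab_group_add \<Rightarrow> 'v) \<Rightarrow> 'v mat set \<Rightarrow> bool" where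
  "proper_cone scal C \<longleftrightarrow>
     0 \<in> C \<and> (\<forall>A\<in>C. \<forall>B\<in>C. A + B \<in> C) \<and>
     (\<forall>t::real. \<forall>A\<in>C. 0 \<le> t \<longrightarrow> mscal scal (complex_of_real t) A \<in> C) \<and>
     (\<forall>A. A \<in> C \<and> - A \<in> C \<longrightarrow> A = 0)"

definition matrix_ordered ::
  "(complex \<Rightarrow> 'v::ab_group_add \<Rightarrow> 'v) \<Rightarrow> ('v \<Rightarrow> 'v) \<Rightarrow> (nat \<Rightarrow> 'v mat set) \<Rightarrow> bool" where
  "matrix_ordered scal star pos \<longleftrightarrow>
     (\<forall>n. 0 < n \<longrightarrow> pos n \<subseteq> sa star n \<and> proper_cone scal (pos n)) \<and>
     (\<forall>n k A B. 0 < n \<and> 0 < k \<and> A \<in> pos n \<and> B \<in> pos k \<longrightarrow>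
        dsum n n A B \<in> pos (n + k)) \<and>
     (\<forall>l k X B. 0 < l \<and> 0 < k \<and> X \<in> mats l k \<and> B \<in> pos k \<longrightarrow>
        mprod scal k k X B (ctrans X) \<in> pos l)"

definition normal_mo_star_opsp ::
  "(complex \<Rightarrow> 'v::ab_group_add \<Rightarrow> 'v) \<Rightarrow> ('v \<Rightarrow> 'v) \<Rightarrow>
   (nat \<Rightarrow> nat \<Rightarrow> 'v mat \<Rightarrow> real) \<Rightarrow> (nat \<Rightarrow> 'v mat set) \<Rightarrow> bool" where
  "normal_mo_star_opsp scal star nrm pos \<longleftrightarrow>
     star_operator_space scal star nrm \<and> matrix_ordered scal star pos \<and>
     (\<forall>n. 0 < n \<longrightarrow> (\<forall>S A. (\<forall>j. S j \<in> pos n) \<and> A \<in> mats n n \<and>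
          (\<lambda>j. nrm n n (S j - A)) \<longlonglongrightarrow> 0 \<longrightarrow> A \<in> pos n)) \<and>
     (\<forall>n A B C. 0 < n \<and> A \<in> sa star n \<and> B \<in> sa star n \<and> C \<in> sa star n \<and>
        B - A \<in> pos n \<and> C - B \<in> pos n \<longrightarrow>
        nrm n n B \<le> max (nrm n n A) (nrm n n C))"

definition d_V :: "(nat \<Rightarrow> nat \<Rightarrow> 'v::plus mat \<Rightarrow> real) \<Rightarrow> (nat \<Rightarrow> 'v mat set) \<Rightarrow>
    nat \<Rightarrow> 'v mat \<Rightarrow> real" where
  "d_V nrm pos n A = (INF P\<in>pos n. nrm n n (A + P))"

definition proper_gauge ::
  "(complex \<Rightarrow> 'v::ab_group_add \<Rightarrow> 'v) \<Rightarrow> 'v mat set \<Rightarrow> ('v mat \<Rightarrow> real) \<Rightarrow> bool" where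
  "proper_gauge scal S g \<longleftrightarrow>
     (\<forall>x\<in>S. 0 \<le> g x) \<and>
     (\<forall>x\<in>S. \<forall>y\<in>S. g (x + y) \<le> g x + g y) \<and>
     (\<forall>t::real. \<forall>x\<in>S. 0 < t \<longrightarrow> g (mscal scal (complex_of_real t) x) = t * g x) \<and>
     (\<forall>x\<in>S. g x = 0 \<and> g (- x) = 0 \<longrightarrow> x = 0)"

definition Linf_MOS ::
  "(complex \<Rightarrow> 'v::ab_group_add \<Rightarrow> 'v) \<Rightarrow> ('v \<Rightarrow> 'v) \<Rightarrow> (nat \<Rightarrow> 'v mat \<Rightarrow> real) \<Rightarrow> bool" where
  "Linf_MOS scal star \<nu> \<longleftrightarrow>
     star_vector_space scal star \<and>
     (\<forall>n. 0 < n \<longrightarrow> proper_gauge scal (sa star n) (\<nu> n)) \<and>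
     (\<forall>n k X A. 0 < n \<and> 0 < k \<and> X \<in> mats n k \<and> A \<in> sa star n \<longrightarrow>
        \<nu> k (mprod scal n n (ctrans X) A X) \<le> (cnorm n k X)\<^sup>2 * \<nu> n A) \<and>
     (\<forall>n k A B. 0 < n \<and> 0 < k \<and> A \<in> sa star n \<and> B \<in> sa star k \<longrightarrow>
        \<nu> (n + k) (dsum n n A B) = max (\<nu> n A) (\<nu> k B))"

end

theory Submission
  imports Defs "HOL-Analysis.L2_Norm"
begin

text \<open>The function d_n(A) is the distance from A to the cone -M_n(V)_+. Since the cone is
closed under addition and positive scaling, d_n is subadditive and positively homogeneous;
since the cone is closed, d_n(A) = d_n(-A) = 0 forces A and -A into the cone, so A = 0.
Compressions X^* (A + P) X keep P positive and shrink the norm by at most the factor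
\<parallel>X\<parallel>^2, giving the compression inequality. For direct sums, the L^\<infinity> property of the
norm gives d(A \<oplus> B) \<le> max (d A) (d B), and compressing onto the two diagonal blocks with
coordinate isometries gives the reverse inequality.\<close>

subsection \<open>Operator norms of scalar matrices\<close>

lemma vnorm_L2: "vnorm n v = L2_set (\<lambda>i. cmod (v i)) {..<n}"
  by (simp add: vnorm_def L2_set_def)

lemma vnorm_nonneg: "0 \<le> vnorm n v"
  by (simp add: vnorm_def sum_nonneg)

lemma vnorm_zero: "vnorm n (\<lambda>i. 0) = 0"
  by (simp add: vnorm_def)

lemma vnorm_scale: "vnorm n (\<lambda>i. c * v i) = cmod c * vnorm n v"
proof -
  have "(\<Sum>i<n. (cmod (c * v i))\<^sup>2) = (cmod c)\<^sup>2 * (\<Sum>i<n. (cmod (v i))\<^sup>2)"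
    by (simp add: norm_mult power_mult_distrib sum_distrib_left)
  then show ?thesis by (simp add: vnorm_def real_sqrt_mult)
qed

lemma mulv_scale: "mulv m X (\<lambda>i. c * v i) = (\<lambda>i. c * mulv m X v i)"
  by (simp add: mulv_def sum_distrib_left algebra_simps)

lemma bdd_above_cnorm: "bdd_above ((\<lambda>v. vnorm n (mulv k X v)) ` {v. vnorm k v \<le> 1})"
proof (rule bdd_aboveI2)
  fix v assume "v \<in> {v. vnorm k v \<le> 1}"
  then have coords: "cmod (v j) \<le> 1" if "j < k" for j
    using member_le_L2_set[of "{..<k}" j "\<lambda>i. cmod (v i)"] that by (auto simp: vnorm_L2)
  have "vnorm n (mulv k X v) \<le> (\<Sum>i<n. cmod (mulv k X v i))"
    unfolding vnorm_L2 by (rule L2_set_le_sum) auto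
  also have "\<dots> \<le> (\<Sum>i<n. \<Sum>j<k. cmod (X i j * v j))"
    unfolding mulv_def by (intro sum_mono norm_sum)
  also have "\<dots> \<le> (\<Sum>i<n. \<Sum>j<k. cmod (X i j))"
    using coords by (intro sum_mono) (simp add: norm_mult mult_left_le)
  finally show "vnorm n (mulv k X v) \<le> (\<Sum>i<n. \<Sum>j<k. cmod (X i j))" .
qed

lemma cnorm_upper: "vnorm k v \<le> 1 \<Longrightarrow> vnorm n (mulv k X v) \<le> cnorm n k X"
  unfolding cnorm_def by (rule cSUP_upper[OF _ bdd_above_cnorm]) auto

lemma cnorm_least: "(\<And>v. vnorm k v \<le> 1 \<Longrightarrow> vnorm n (mulv k X v) \<le> c) \<Longrightarrow> cnorm n k X \<le> c"
  unfolding cnorm_def by (rule cSUP_least) (auto intro: exI[of _ "\<lambda>i. 0"] simp: vnorm_zero)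

lemma cnorm_nonneg: "0 \<le> cnorm n k X"
  using cnorm_upper[of k "\<lambda>i. 0" n X] by (simp add: vnorm_zero mulv_def)

lemma vnorm_mulv_le: "vnorm n (mulv k X v) \<le> cnorm n k X * vnorm k v"
proof (cases "vnorm k v = 0")
  case True
  then have "\<forall>j\<in>{..<k}. cmod (v j) = 0"
    unfolding vnorm_L2 by (subst (asm) L2_set_eq_0_iff) auto
  then have "mulv k X v = (\<lambda>i. 0)" by (auto simp: mulv_def fun_eq_iff)
  then show ?thesis by (simp add: vnorm_zero True)
next
  case False
  then have pos: "vnorm k v > 0" using vnorm_nonneg[of k v] by linarith
  define c where "c = complex_of_real (1 / vnorm k v)"
  have "vnorm k (\<lambda>i. c * v i) = 1"
    unfolding vnorm_scale c_def norm_of_real using pos by simp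
  then have "vnorm n (mulv k X (\<lambda>i. c * v i)) \<le> cnorm n k X" by (intro cnorm_upper) simp
  then have "(1 / vnorm k v) * vnorm n (mulv k X v) \<le> cnorm n k X"
    unfolding mulv_scale vnorm_scale c_def norm_of_real using pos by simp
  then show ?thesis using pos by (simp add: field_simps)
qed

lemma cnorm_ctrans_le: "cnorm k n (ctrans X) \<le> cnorm n k X"
proof (rule cnorm_least)
  fix v assume v1: "vnorm n v \<le> 1"
  define w where "w = mulv n (ctrans X) v"
  define C where "C = cnorm n k X"
  text \<open>\<parallel>w\<parallel>^2 = \<langle>X^* v, w\<rangle> = \<langle>v, X w\<rangle>, followed by Cauchy-Schwarz.\<close>
  have "complex_of_real ((vnorm k w)\<^sup>2) = (\<Sum>j<k. cnj (w j) * w j)"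
  proof -
    have "(vnorm k w)\<^sup>2 = (\<Sum>j<k. (cmod (w j))\<^sup>2)"
      unfolding vnorm_def by (rule real_sqrt_pow2) (simp add: sum_nonneg)
    then show ?thesis by (simp add: complex_norm_square mult.commute del: of_real_power)
  qed
  also have "\<dots> = (\<Sum>j<k. \<Sum>i<n. cnj (w j) * (cnj (X i j) * v i))"
    by (simp add: w_def mulv_def ctrans_def sum_distrib_left)
  also have "\<dots> = (\<Sum>i<n. v i * cnj (mulv k X w i))"
    by (subst sum.swap) (simp add: mulv_def sum_distrib_left mult_ac)
  finally have inner: "complex_of_real ((vnorm k w)\<^sup>2) = (\<Sum>i<n. v i * cnj (mulv k X w i))" .
  have "(vnorm k w)\<^sup>2 = cmod (complex_of_real ((vnorm k w)\<^sup>2))"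
    by (simp only: norm_of_real) simp
  also have "\<dots> \<le> (\<Sum>i<n. \<bar>cmod (v i)\<bar> * \<bar>cmod (mulv k X w i)\<bar>)"
    unfolding inner by (rule order_trans[OF norm_sum]) (simp add: norm_mult)
  also have "\<dots> \<le> vnorm n v * vnorm n (mulv k X w)"
    unfolding vnorm_L2 by (rule L2_set_mult_ineq)
  also have "\<dots> \<le> 1 * (C * vnorm k w)"
    by (rule mult_mono[OF v1 vnorm_mulv_le[of n k X w, folded C_def]])
      (auto simp: vnorm_nonneg)
  finally have sq: "(vnorm k w)\<^sup>2 \<le> C * vnorm k w" by simp
  have "vnorm k w \<le> C"
  proof (cases "vnorm k w = 0")
    case True then show ?thesis by (simp add: C_def cnorm_nonneg)
  next
    case False
    then have "vnorm k w > 0" using vnorm_nonneg[of k w] by linarith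
    with sq show ?thesis by (simp add: power2_eq_square)
  qed
  then show "vnorm k (mulv n (ctrans X) v) \<le> cnorm n k X" by (simp add: w_def C_def)
qed

lemma ctrans_ctrans [simp]: "ctrans (ctrans X) = X"
  by (simp add: ctrans_def)

lemma ctrans_mats: "X \<in> mats n k \<Longrightarrow> ctrans X \<in> mats k n"
  by (auto simp: mats_def ctrans_def)

definition embedding_mat :: "nat \<Rightarrow> (nat \<Rightarrow> nat) \<Rightarrow> complex mat" where
  "embedding_mat m f = (\<lambda>q j. if j < m \<and> q = f j then 1 else 0)"

lemma embedding_mat_mats: "(\<And>j. j < m \<Longrightarrow> f j < N) \<Longrightarrow> embedding_mat m f \<in> mats N m"
  by (fastforce simp: mats_def embedding_mat_def)

lemma cnorm_embedding_mat_le_one: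
  assumes inj: "inj_on f {..<m}" and img: "\<And>j. j < m \<Longrightarrow> f j < N"
  shows "cnorm N m (embedding_mat m f) \<le> 1"
proof (rule cnorm_least)
  fix v assume v1: "vnorm m v \<le> 1"
  define g where "g i = (cmod (mulv m (embedding_mat m f) v i))\<^sup>2" for i
  have g_image: "g (f j) = (cmod (v j))\<^sup>2" if "j < m" for j
  proof -
    have "mulv m (embedding_mat m f) v (f j) = (\<Sum>j'<m. if j' = j then v j' else 0)"
      unfolding mulv_def embedding_mat_def
      by (rule sum.cong) (use inj that in \<open>auto dest: inj_onD\<close>)
    then show ?thesis using that by (simp add: g_def)
  qed
  have g_outside: "g i = 0" if "i \<notin> f ` {..<m}" for i
  proof -
    have "mulv m (embedding_mat m f) v i = 0"
      unfolding mulv_def embedding_mat_def by (rule sum.neutral) (use that in auto)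
    then show ?thesis by (simp add: g_def)
  qed
  have "(\<Sum>i<N. g i) = (\<Sum>i\<in>f ` {..<m}. g i)"
    by (rule sum.mono_neutral_right) (use img g_outside in auto)
  also have "\<dots> = (\<Sum>j<m. g (f j))" by (rule sum.reindex[OF inj, unfolded comp_def])
  also have "\<dots> = (\<Sum>j<m. (cmod (v j))\<^sup>2)" by (rule sum.cong) (auto simp: g_image)
  finally have "vnorm N (mulv m (embedding_mat m f) v) = vnorm m v"
    by (simp add: vnorm_def g_def)
  then show "vnorm N (mulv m (embedding_mat m f) v) \<le> 1" using v1 by simp
qed

locale normal_mo_space =
  fixes scal :: "complex \<Rightarrow> 'v::ab_group_add \<Rightarrow> 'v"
    and star :: "'v \<Rightarrow> 'v"
    and nrm :: "nat \<Rightarrow> nat \<Rightarrow> 'v mat \<Rightarrow> real"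
    and pos :: "nat \<Rightarrow> 'v mat set"
  assumes normal_mo: "normal_mo_star_opsp scal star nrm pos"
begin

lemma star_vector_space: "star_vector_space scal star"
  and star_operator_space: "star_operator_space scal star nrm"
  and matrix_ordered: "matrix_ordered scal star pos"
  using normal_mo by (simp_all add: normal_mo_star_opsp_def star_operator_space_def)

lemma scal_add_right: "scal a (x + y) = scal a x + scal a y"
  and scal_add_left: "scal (a + b) x = scal a x + scal b x"
  and scal_scal: "scal a (scal b x) = scal (a * b) x"
  and scal_one: "scal 1 x = x"
  using star_vector_space by (simp_all add: star_vector_space_def)

lemma scal_zero_right: "scal a 0 = 0"
  using scal_add_right[of a 0 0] by simp

lemma scal_zero_left: "scal 0 x = 0"
  using scal_add_left[of 0 0 x] by simp

lemma is_norm_on_nrm: "0 < n \<Longrightarrow> 0 < m \<Longrightarrow> is_norm_on scal n m (nrm n m)"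
  using star_operator_space by (simp add: star_operator_space_def)

lemma nrm_nonneg: "0 < n \<Longrightarrow> 0 < m \<Longrightarrow> A \<in> mats n m \<Longrightarrow> 0 \<le> nrm n m A"
  and nrm_mscal: "0 < n \<Longrightarrow> 0 < m \<Longrightarrow> A \<in> mats n m \<Longrightarrow>
    nrm n m (mscal scal c A) = cmod c * nrm n m A"
  and nrm_triangle: "0 < n \<Longrightarrow> 0 < m \<Longrightarrow> A \<in> mats n m \<Longrightarrow> B \<in> mats n m \<Longrightarrow>
    nrm n m (A + B) \<le> nrm n m A + nrm n m B"
  using is_norm_on_nrm[of n m] by (simp_all add: is_norm_on_def)

lemma nrm_mprod_le:
  "\<lbrakk>0 < l; 0 < n; 0 < m; 0 < k; X \<in> mats l n; A \<in> mats n m; Y \<in> mats m k\<rbrakk> \<Longrightarrow>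
    nrm l k (mprod scal n m X A Y) \<le> cnorm l n X * nrm n m A * cnorm m k Y"
  using star_operator_space by (simp add: star_operator_space_def)

lemma nrm_dsum:
  "\<lbrakk>0 < n; 0 < m; 0 < k; 0 < l; A \<in> mats n m; B \<in> mats k l\<rbrakk> \<Longrightarrow>
    nrm (n + k) (m + l) (dsum n m A B) = max (nrm n m A) (nrm k l B)"
  using star_operator_space by (simp add: star_operator_space_def)

lemma proper_cone_pos: "0 < n \<Longrightarrow> proper_cone scal (pos n)"
  and pos_sa: "0 < n \<Longrightarrow> pos n \<subseteq> sa star n"
  using matrix_ordered by (simp_all add: matrix_ordered_def)

lemma pos_mats: "0 < n \<Longrightarrow> P \<in> pos n \<Longrightarrow> P \<in> mats n n"
  using pos_sa by (auto simp: sa_def)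

lemma zero_pos: "0 < n \<Longrightarrow> 0 \<in> pos n"
  and add_pos: "0 < n \<Longrightarrow> P \<in> pos n \<Longrightarrow> Q \<in> pos n \<Longrightarrow> P + Q \<in> pos n"
  and mscal_pos: "0 < n \<Longrightarrow> P \<in> pos n \<Longrightarrow> 0 \<le> t \<Longrightarrow>
    mscal scal (complex_of_real t) P \<in> pos n"
  and pos_antisym: "0 < n \<Longrightarrow> P \<in> pos n \<Longrightarrow> - P \<in> pos n \<Longrightarrow> P = 0"
  using proper_cone_pos[of n] by (simp_all add: proper_cone_def)

lemma dsum_pos: "0 < n \<Longrightarrow> 0 < k \<Longrightarrow> P \<in> pos n \<Longrightarrow> Q \<in> pos k \<Longrightarrow> dsum n n P Q \<in> pos (n + k)"
  using matrix_ordered by (simp add: matrix_ordered_def)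

lemma compression_pos:
  assumes "0 < n" "0 < k" "X \<in> mats n k" "P \<in> pos n"
  shows "mprod scal n n (ctrans X) P X \<in> pos k"
proof -
  have "mprod scal n n (ctrans X) P (ctrans (ctrans X)) \<in> pos k"
    by (rule matrix_ordered[unfolded matrix_ordered_def, THEN conjunct2, THEN conjunct2, rule_format])
      (use assms ctrans_mats[OF assms(3)] in simp)
  then show ?thesis by simp
qed

lemma pos_closed:
  assumes "0 < n" "\<And>j. S j \<in> pos n" "A \<in> mats n n" "(\<lambda>j. nrm n n (S j - A)) \<longlonglongrightarrow> 0"
  shows "A \<in> pos n"
proof -
  have "\<forall>S A. (\<forall>j. S j \<in> pos n) \<and> A \<in> mats n n \<and> (\<lambda>j. nrm n n (S j - A)) \<longlonglongrightarrow> 0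
      \<longrightarrow> A \<in> pos n"
    using normal_mo assms(1) unfolding normal_mo_star_opsp_def by blast
  with assms show ?thesis by blast
qed

lemma mats_add: "(A::'v mat) \<in> mats n m \<Longrightarrow> B \<in> mats n m \<Longrightarrow> A + B \<in> mats n m"
  and mats_uminus: "(A::'v mat) \<in> mats n m \<Longrightarrow> - A \<in> mats n m"
  and mats_mscal: "(A::'v mat) \<in> mats n m \<Longrightarrow> mscal scal c A \<in> mats n m"
  by (simp_all add: mats_def mscal_def scal_zero_right)

lemma mats_add_pos: "0 < n \<Longrightarrow> (A::'v mat) \<in> mats n n \<Longrightarrow> P \<in> pos n \<Longrightarrow> A + P \<in> mats n n"
  by (rule mats_add) (auto intro: pos_mats)

lemma mscal_add: "mscal scal c (A + B) = mscal scal c A + mscal scal c B"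
  by (simp add: mscal_def fun_eq_iff scal_add_right)

lemma mprod_add: "mprod scal n m X (A + B) Y = mprod scal n m X A Y + mprod scal n m X B Y"
  by (simp add: mprod_def fun_eq_iff scal_add_right sum.distrib)

lemma mprod_mats: "X \<in> mats l n \<Longrightarrow> Y \<in> mats m k \<Longrightarrow> mprod scal n m X A Y \<in> mats l k"
  by (auto simp: mats_def mprod_def scal_zero_left)

lemma mprod_embedding_mat:
  assumes "\<And>j. j < m \<Longrightarrow> f j < N"
  shows "mprod scal N N (ctrans (embedding_mat m f)) M (embedding_mat m f) =
    (\<lambda>i j. if i < m \<and> j < m then M (f i) (f j) else 0)"
proof (intro ext)
  fix i j
  let ?E = "embedding_mat m f"
  have entry: "scal (ctrans ?E i p * ?E q j) (M p q) =
      (if i < m \<and> j < m then if q = f j then if p = f i then M p q else 0 else 0 else 0)" for p q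
    by (auto simp: ctrans_def embedding_mat_def scal_one scal_zero_left)
  show "mprod scal N N (ctrans ?E) M ?E i j = (if i < m \<and> j < m then M (f i) (f j) else 0)"
    unfolding mprod_def entry using assms by (auto simp: sum.delta)
qed

lemma dsum_mats: "(A::'v mat) \<in> mats n n \<Longrightarrow> B \<in> mats k k \<Longrightarrow> dsum n n A B \<in> mats (n + k) (n + k)"
  by (auto simp: mats_def dsum_def)

lemma dsum_add: "dsum n n ((A::'v mat) + P) (B + Q) = dsum n n A B + dsum n n P Q"
  by (auto simp: dsum_def fun_eq_iff)

subsection \<open>The gauges d_n\<close>

abbreviation "d \<equiv> d_V nrm pos"

lemma d_le: "0 < n \<Longrightarrow> A \<in> mats n n \<Longrightarrow> P \<in> pos n \<Longrightarrow> d n A \<le> nrm n n (A + P)"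
  unfolding d_V_def
  by (rule cINF_lower[OF bdd_belowI2[of _ 0]]) (auto intro: nrm_nonneg mats_add_pos)

lemma d_ge: "0 < n \<Longrightarrow> (\<And>P. P \<in> pos n \<Longrightarrow> c \<le> nrm n n (A + P)) \<Longrightarrow> c \<le> d n A"
  unfolding d_V_def by (rule cINF_greatest) (auto intro: zero_pos)

lemma d_ge_scaled:
  assumes "0 < n" "0 < t" "\<And>P. P \<in> pos n \<Longrightarrow> c \<le> t * nrm n n (A + P)"
  shows "c \<le> t * d n A"
proof -
  have "c / t \<le> d n A"
    by (rule d_ge) (use assms in \<open>auto simp: field_simps\<close>)
  then show ?thesis using assms(2) by (simp add: field_simps)
qed

lemma d_nonneg: "0 < n \<Longrightarrow> A \<in> mats n n \<Longrightarrow> 0 \<le> d n A"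
  by (rule d_ge) (auto intro: nrm_nonneg mats_add_pos)

lemma d_approx:
  assumes "0 < n" "0 < e"
  obtains P where "P \<in> pos n" "nrm n n (A + P) < d n A + e"
proof -
  have "\<not> (\<forall>P\<in>pos n. d n A + e \<le> nrm n n (A + P))"
    using d_ge[OF assms(1), of "d n A + e" A] assms(2) by auto
  then show ?thesis using that by (auto simp: not_le)
qed

lemma d_add_le:
  assumes n: "0 < n" and A: "A \<in> mats n n" and B: "B \<in> mats n n"
  shows "d n (A + B) \<le> d n A + d n B"
proof (rule field_le_epsilon)
  fix e :: real assume e: "0 < e"
  obtain P where P: "P \<in> pos n" "nrm n n (A + P) < d n A + e / 2"
    using d_approx[OF n half_gt_zero[OF e]] by blast
  obtain Q where Q: "Q \<in> pos n" "nrm n n (B + Q) < d n B + e / 2"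
    using d_approx[OF n half_gt_zero[OF e]] by blast
  have "d n (A + B) \<le> nrm n n ((A + P) + (B + Q))"
    using d_le[OF n mats_add[OF A B] add_pos[OF n P(1) Q(1)]] by (simp add: add_ac)
  also have "\<dots> \<le> nrm n n (A + P) + nrm n n (B + Q)"
    by (rule nrm_triangle[OF n n mats_add_pos[OF n A P(1)] mats_add_pos[OF n B Q(1)]])
  finally show "d n (A + B) \<le> d n A + d n B + e" using P Q by linarith
qed

lemma d_mscal_le:
  assumes n: "0 < n" and A: "A \<in> mats n n" and t: "0 < t"
  shows "d n (mscal scal (complex_of_real t) A) \<le> t * d n A"
proof (rule d_ge_scaled[OF n t])
  fix P assume P: "P \<in> pos n"
  have "d n (mscal scal (complex_of_real t) A)
      \<le> nrm n n (mscal scal (complex_of_real t) A + mscal scal (complex_of_real t) P)"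
    using mscal_pos[OF n P, of t] t by (intro d_le n mats_mscal A) auto
  also have "\<dots> = t * nrm n n (A + P)"
    using t by (simp add: mscal_add[symmetric] nrm_mscal n mats_add_pos A P)
  finally show "d n (mscal scal (complex_of_real t) A) \<le> t * nrm n n (A + P)" .
qed

lemma d_mscal:
  assumes n: "0 < n" and A: "A \<in> mats n n" and t: "0 < t"
  shows "d n (mscal scal (complex_of_real t) A) = t * d n A"
proof (rule antisym[OF d_mscal_le[OF n A t]])
  have "d n A = d n (mscal scal (complex_of_real (1 / t)) (mscal scal (complex_of_real t) A))"
    using t by (simp add: mscal_def scal_scal scal_one flip: of_real_mult)
  also have "\<dots> \<le> (1 / t) * d n (mscal scal (complex_of_real t) A)"
    using t by (intro d_mscal_le n mats_mscal A) auto
  finally show "t * d n A \<le> d n (mscal scal (complex_of_real t) A)"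
    using t by (simp add: field_simps)
qed

lemma d_eq_0_imp_uminus_pos:
  assumes n: "0 < n" and A: "A \<in> mats n n" and d0: "d n A = 0"
  shows "- A \<in> pos n"
proof -
  have "\<exists>P. P \<in> pos n \<and> nrm n n (A + P) < 1 / real (Suc j)" for j
    by (rule d_approx[OF n, of "1 / real (Suc j)" A]) (auto simp: d0)
  then obtain S where S: "\<And>j. S j \<in> pos n" "\<And>j. nrm n n (A + S j) < 1 / real (Suc j)"
    by metis
  have "(\<lambda>j. nrm n n (A + S j)) \<longlonglongrightarrow> 0"
  proof (rule tendsto_sandwich[of "\<lambda>_. 0" _ _ "\<lambda>j. 1 / real (Suc j)"])
    show "\<forall>\<^sub>F j in sequentially. 0 \<le> nrm n n (A + S j)"
      by (intro always_eventually allI nrm_nonneg[OF n n] mats_add_pos[OF n A S(1)])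
    show "\<forall>\<^sub>F j in sequentially. nrm n n (A + S j) \<le> 1 / real (Suc j)"
      by (intro always_eventually allI less_imp_le S(2))
    show "(\<lambda>j. 1 / real (Suc j)) \<longlonglongrightarrow> 0" by (rule LIMSEQ_Suc[OF lim_const_over_n])
  qed simp
  then show ?thesis by (intro pos_closed[OF n S(1) mats_uminus[OF A]]) (simp add: add.commute)
qed

lemma d_proper:
  assumes n: "0 < n" and A: "A \<in> mats n n" and "d n A = 0" "d n (- A) = 0"
  shows "A = 0"
  using pos_antisym[OF n] d_eq_0_imp_uminus_pos[OF n] assms mats_uminus
  by (metis minus_minus)

lemma d_compression_le:
  assumes n: "0 < n" and k: "0 < k" and X: "X \<in> mats n k" and A: "A \<in> mats n n"
  shows "d k (mprod scal n n (ctrans X) A X) \<le> (cnorm n k X)\<^sup>2 * d n A"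
proof -
  define c where "c = cnorm n k X"
  have XAX: "mprod scal n n (ctrans X) A X \<in> mats k k"
    by (rule mprod_mats[OF ctrans_mats[OF X] X])
  have bound: "d k (mprod scal n n (ctrans X) A X) \<le> c\<^sup>2 * nrm n n (A + P)"
    if P: "P \<in> pos n" for P
  proof -
    have "d k (mprod scal n n (ctrans X) A X)
        \<le> nrm k k (mprod scal n n (ctrans X) A X + mprod scal n n (ctrans X) P X)"
      by (rule d_le[OF k XAX compression_pos[OF n k X P]])
    also have "\<dots> \<le> cnorm k n (ctrans X) * nrm n n (A + P) * cnorm n k X"
      unfolding mprod_add[symmetric]
      by (rule nrm_mprod_le[OF k n n k ctrans_mats[OF X] mats_add_pos[OF n A P] X])
    also have "\<dots> \<le> c * nrm n n (A + P) * c"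
      unfolding c_def using nrm_nonneg[OF n n mats_add_pos[OF n A P]] cnorm_nonneg[of n k X]
      by (intro mult_right_mono) (auto simp: cnorm_ctrans_le)
    finally show ?thesis by (simp add: power2_eq_square mult_ac)
  qed
  show ?thesis
  proof (cases "c = 0")
    case True
    then show ?thesis using bound[OF zero_pos[OF n]] by (simp add: c_def)
  next
    case False
    then have "0 < c\<^sup>2" using cnorm_nonneg[of n k X] by (simp add: c_def)
    then show ?thesis using d_ge_scaled[OF n _ bound] by (simp add: c_def)
  qed
qed

lemma d_dsum_le:
  assumes n: "0 < n" and k: "0 < k" and A: "A \<in> mats n n" and B: "B \<in> mats k k"
  shows "d (n + k) (dsum n n A B) \<le> max (d n A) (d k B)"
proof (rule field_le_epsilon)
  fix e :: real assume e: "0 < e"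
  obtain P where P: "P \<in> pos n" "nrm n n (A + P) < d n A + e"
    using d_approx[OF n e] by blast
  obtain Q where Q: "Q \<in> pos k" "nrm k k (B + Q) < d k B + e"
    using d_approx[OF k e] by blast
  have "d (n + k) (dsum n n A B) \<le> nrm (n + k) (n + k) (dsum n n A B + dsum n n P Q)"
    using n by (intro d_le dsum_mats A B dsum_pos k P(1) Q(1)) auto
  also have "\<dots> = max (nrm n n (A + P)) (nrm k k (B + Q))"
    unfolding dsum_add[symmetric]
    by (rule nrm_dsum[OF n n k k mats_add_pos[OF n A P(1)] mats_add_pos[OF k B Q(1)]])
  finally show "d (n + k) (dsum n n A B) \<le> max (d n A) (d k B) + e" using P Q by linarith
qed

lemma d_compression_embedding_le:
  assumes m: "0 < m" and N: "0 < N" and D: "D \<in> mats N N"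
    and inj: "inj_on f {..<m}" and img: "\<And>j. j < m \<Longrightarrow> f j < N"
  shows "d m (\<lambda>i j. if i < m \<and> j < m then D (f i) (f j) else 0) \<le> d N D"
proof -
  let ?E = "embedding_mat m f"
  have "(cnorm N m ?E)\<^sup>2 \<le> 1"
    by (rule power_le_one[OF cnorm_nonneg cnorm_embedding_mat_le_one[OF inj img]])
  then have "(cnorm N m ?E)\<^sup>2 * d N D \<le> d N D"
    using d_nonneg[OF N D] by (simp add: mult_left_le_one_le)
  moreover have "?E \<in> mats N m"
    by (rule embedding_mat_mats) (rule img)
  ultimately show ?thesis
    using d_compression_le[OF N m _ D, of ?E] mprod_embedding_mat[of m f N D] img by simp
qed

lemma d_dsum:
  assumes n: "0 < n" and k: "0 < k" and A: "A \<in> mats n n" and B: "B \<in> mats k k"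
  shows "d (n + k) (dsum n n A B) = max (d n A) (d k B)"
proof (rule antisym[OF d_dsum_le[OF assms]])
  have nk: "0 < n + k" and D: "dsum n n A B \<in> mats (n + k) (n + k)"
    using n dsum_mats[OF A B] by auto
  have "(\<lambda>i j. if i < n \<and> j < n then dsum n n A B i j else 0) = A"
    using A by (auto simp: dsum_def mats_def fun_eq_iff)
  then have "d n A \<le> d (n + k) (dsum n n A B)"
    using d_compression_embedding_le[OF n nk D, of "\<lambda>i. i"] by simp
  moreover have "(\<lambda>i j. if i < k \<and> j < k then dsum n n A B (i + n) (j + n) else 0) = B"
    using B by (auto simp: dsum_def mats_def fun_eq_iff)
  then have "d k B \<le> d (n + k) (dsum n n A B)"
    using d_compression_embedding_le[OF k nk D, of "\<lambda>i. i + n"] by (simp add: inj_on_def)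
  ultimately show "max (d n A) (d k B) \<le> d (n + k) (dsum n n A B)" by simp
qed

end

theorem proposition3p5:
  fixes scal :: "complex \<Rightarrow> 'v::ab_group_add \<Rightarrow> 'v"
    and star :: "'v \<Rightarrow> 'v"
    and nrm :: "nat \<Rightarrow> nat \<Rightarrow> 'v mat \<Rightarrow> real"
    and pos :: "nat \<Rightarrow> 'v mat set"
  assumes "normal_mo_star_opsp scal star nrm pos"
  shows "Linf_MOS scal star (d_V nrm pos)"
proof -
  interpret normal_mo_space scal star nrm pos by (rule normal_mo_space.intro) (rule assms)
  have "proper_gauge scal (sa star n) (d n)" if n: "0 < n" for n
    unfolding proper_gauge_def sa_def
    using d_nonneg[OF n] d_add_le[OF n] d_mscal[OF n] d_proper[OF n] by auto
  then show ?thesis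
    unfolding Linf_MOS_def sa_def
    using star_vector_space d_compression_le d_dsum by auto
qed

end
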